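(* In the setting of the context (with assumptions (A.1)–(A.3)), suppose the PMM generates infinite sequences $\{(u_k,v_k)\}$, $\{(z_k,w_k)\}$, $\{\gamma_k\}$, $\{\rho_k\}$; define $x_k=z_{k-1}+\lambda w_{k-1}+\lambda(Cv_k-d)$, $y_k=x_k-\lambda(w_{k-1}-Mu_k)$, and for $k\ge1$ the ergodic quantities $$\Gamma_k=\sum_{j=1}^k\rho_j\gamma_j,\quad \bar u_k=\frac1{\Gamma_k}\sum_{j=1}^k\rho_j\gamma_ju_j,\quad \bar v_k=\frac1{\Gamma_k}\sum_{j=1}^k\rho_j\gamma_jv_j,\quad \bar x_k=\frac1{\Gamma_k}\sum_{j=1}^k\rho_j\gamma_jx_j,\quad \bar y_k=\frac1{\Gamma_k}\sum_{j=1}^k\rho_j\gamma_jy_j,$$ $$\bar\epsilon_k^u=\frac1{\Gamma_k}\sum_{j=1}^k\rho_j\gamma_j\langle u_j-\bar u_k,-M^*y_j\rangle,\qquad \bar\epsilon_k^v=\frac1{\Gamma_k}\sum_{j=1}^k\rho_j\gamma_j\langle v_j-\bar v_k,-C^*x_j\rangle.$$ Then $\bar\epsilon_k^v\ge0$, $\bar\epsilon_k^u\ge0$, and $$0\in\partial_{\bar\epsilon_k^v}g(\bar v_k)+C^*\bar x_k,\qquad 0\in\partial_{\bar\epsilon_k^u}f(\bar u_k)+M^*\bar y_k.$$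
   Context: Let $f:\mathbb{R}^{m_1}\to(-\infty,\infty]$, $g:\mathbb{R}^{m_2}\to(-\infty,\infty]$ be proper closed convex, $M:\mathbb{R}^{m_1}\to\mathbb{R}^n$, $C:\mathbb{R}^{m_2}\to\mathbb{R}^n$ linear, $d\in\mathbb{R}^n$; consider $\min\{f(u)+g(v):Mu+Cv=d\}$ with Lagrangian $L(u,v,z)=f(u)+g(v)+\langle Mu+Cv-d,z\rangle$. A saddle point is $(u^*,v^*,z^* )$ with $L(u^*,v^*,z^* )$ finite and $\min_{(u,v)}L(u,v,z^* )=L(u^*,v^*,z^* )=\max_zL(u^*,v^*,z)$. $^*$ on functions denotes the Fenchel conjugate, on operators the adjoint. Standing assumptions: (A.1) $L$ has a saddle point; (A.2) $\mathrm{ri}(\mathrm{dom} f^* )\cap\mathrm{range}(M^* )\ne\emptyset$; (A.3) $\mathrm{ri}(\mathrm{dom} g^* )\cap\mathrm{range}(C^* )\ne\emptyset$. For $\epsilon\ge0$, the $\epsilon$-subdifferential is $\partial_\epsilon \theta(x)=\{s:\theta(x')\ge\theta(x)+\langle s,x'-x\rangle-\epsilon\ \forall x'\}$. PMM: given $(z_0,w_0)\in\mathbb{R}^n\times\mathbb{R}^n$, $\lambda>0$, $\bar\rho\in[0,1)$, for $k=1,2,\dots$: (1) let $v_k$ be a minimizer of $g(v)+\langle z_{k-1}+\lambda w_{k-1},Cv-d\rangle+\frac\lambda2\|Cv-d\|^2$ and $u_k$ a minimizer of $f(u)+\langle z_{k-1}+\lambda(Cv_k-d),Mu\rangle+\frac\lambda2\|Mu\|^2$;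 (2) if $\|Mu_k+Cv_k-d\|+\|Mu_k-w_{k-1}\|=0$ stop; otherwise set $\gamma_k=\dfrac{\lambda\|Cv_k-d+w_{k-1}\|^2+\lambda\langle d-Cv_k-Mu_k,w_{k-1}-Mu_k\rangle}{\|Mu_k+Cv_k-d\|^2+\lambda^2\|Mu_k-w_{k-1}\|^2}$; (3) choose $\rho_k\in[1-\bar\rho,1+\bar\rho]$ and set $z_k=z_{k-1}+\rho_k\gamma_k(Mu_k+Cv_k-d)$, $w_k=w_{k-1}-\rho_k\gamma_k\lambda(w_{k-1}-Mu_k)$. *)

theory Defs
  imports "HOL-Analysis.Analysis"
begin

definition proper_fun :: "('a \<Rightarrow> ereal) \<Rightarrow> bool" where
  "proper_fun f \<longleftrightarrow> (\<forall>x. f x \<noteq> -\<infinity>) \<and> (\<exists>x. f x \<noteq> \<infinity>)"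

definition epigraph :: "('a \<Rightarrow> ereal) \<Rightarrow> ('a \<times> real) set" where
  "epigraph f = {(x, t). f x \<le> ereal t}"

definition convex_fun :: "('a::real_vector \<Rightarrow> ereal) \<Rightarrow> bool" where
  "convex_fun f \<longleftrightarrow> convex (epigraph f)"

definition closed_fun :: "('a::real_normed_vector \<Rightarrow> ereal) \<Rightarrow> bool" where
  "closed_fun f \<longleftrightarrow> closed (epigraph f)"

definition proper_closed_convex :: "('a::real_normed_vector \<Rightarrow> ereal) \<Rightarrow> bool" where
  "proper_closed_convex f \<longleftrightarrow> proper_fun f \<and> closed_fun f \<and> convex_fun f"

definition fenchel_conj :: "('a::real_inner \<Rightarrow> ereal) \<Rightarrow> 'a \<Rightarrow> ereal" where
  "fenchel_conj f s = (SUP x. ereal (s \<bullet> x) - f x)"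

definition edom :: "('a \<Rightarrow> ereal) \<Rightarrow> 'a set" where
  "edom f = {x. f x < \<infinity>}"

definition eps_subdiff :: "real \<Rightarrow> ('a::real_inner \<Rightarrow> ereal) \<Rightarrow> 'a \<Rightarrow> 'a set" where
  "eps_subdiff eps \<theta> x = {s. \<forall>x'. \<theta> x' \<ge> \<theta> x + ereal (s \<bullet> (x' - x) - eps)}"

definition lagrangian ::
  "('a::real_inner \<Rightarrow> ereal) \<Rightarrow> ('b::real_inner \<Rightarrow> ereal) \<Rightarrow> ('a \<Rightarrow> 'c::real_inner) \<Rightarrow> ('b \<Rightarrow> 'c) \<Rightarrow> 'c
    \<Rightarrow> 'a \<Rightarrow> 'b \<Rightarrow> 'c \<Rightarrow> ereal" where
  "lagrangian f g M C d u v z = f u + g v + ereal ((M u + C v - d) \<bullet> z)"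

definition saddle_point where
  "saddle_point f g M C d u0 v0 z0 \<longleftrightarrow>
     \<bar>lagrangian f g M C d u0 v0 z0\<bar> \<noteq> \<infinity> \<and>
     (\<forall>u v. lagrangian f g M C d u0 v0 z0 \<le> lagrangian f g M C d u v z0) \<and>
     (\<forall>z. lagrangian f g M C d u0 v0 z \<le> lagrangian f g M C d u0 v0 z0)"

definition PMM_run ::
  "('a::euclidean_space \<Rightarrow> ereal) \<Rightarrow> ('b::euclidean_space \<Rightarrow> ereal) \<Rightarrow> ('a \<Rightarrow> 'c::euclidean_space) \<Rightarrow> ('b \<Rightarrow> 'c) \<Rightarrow> 'c
    \<Rightarrow> real \<Rightarrow> real \<Rightarrow> (nat \<Rightarrow> 'a) \<Rightarrow> (nat \<Rightarrow> 'b) \<Rightarrow> (nat \<Rightarrow> 'c) \<Rightarrow> (nat \<Rightarrow> 'c)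
    \<Rightarrow> (nat \<Rightarrow> real) \<Rightarrow> (nat \<Rightarrow> real) \<Rightarrow> bool" where
  "PMM_run f g M C d lam \<rho>bar u v z w \<gamma> \<rho> \<longleftrightarrow>
     lam > 0 \<and> 0 \<le> \<rho>bar \<and> \<rho>bar < 1 \<and>
     (\<forall>k\<ge>1.
        (\<forall>v'. g (v k) + ereal ((z (k-1) + lam *\<^sub>R w (k-1)) \<bullet> (C (v k) - d)) + ereal (lam/2 * (norm (C (v k) - d))\<^sup>2)
             \<le> g v' + ereal ((z (k-1) + lam *\<^sub>R w (k-1)) \<bullet> (C v' - d)) + ereal (lam/2 * (norm (C v' - d))\<^sup>2)) \<and>
        (\<forall>u'. f (u k) + ereal ((z (k-1) + lam *\<^sub>R (C (v k) - d)) \<bullet> M (u k)) + ereal (lam/2 * (norm (M (u k)))\<^sup>2)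
             \<le> f u' + ereal ((z (k-1) + lam *\<^sub>R (C (v k) - d)) \<bullet> M u') + ereal (lam/2 * (norm (M u'))\<^sup>2)) \<and>
        norm (M (u k) + C (v k) - d) + norm (M (u k) - w (k-1)) \<noteq> 0 \<and>
        \<gamma> k = (lam * (norm (C (v k) - d + w (k-1)))\<^sup>2 + lam * ((d - C (v k) - M (u k)) \<bullet> (w (k-1) - M (u k))))
               / ((norm (M (u k) + C (v k) - d))\<^sup>2 + lam\<^sup>2 * (norm (M (u k) - w (k-1)))\<^sup>2) \<and>
        1 - \<rho>bar \<le> \<rho> k \<and> \<rho> k \<le> 1 + \<rho>bar \<and>
        z k = z (k-1) + (\<rho> k * \<gamma> k) *\<^sub>R (M (u k) + C (v k) - d) \<and>
        w k = w (k-1) - (\<rho> k * \<gamma> k * lam) *\<^sub>R (w (k-1) - M (u k)))"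

end

theory Submission
  imports Defs
begin

text \<open>Each PMM subproblem minimizes a convex function plus a smooth quadratic, so its first-order
  optimality condition says that \<open>-C\<^sup>* x\<^sub>k\<close> is a subgradient of \<open>g\<close> at \<open>v\<^sub>k\<close> and \<open>-M\<^sup>* y\<^sub>k\<close> one of
  \<open>f\<close> at \<open>u\<^sub>k\<close>. Averaging the subgradient inequalities with the positive weights \<open>\<rho>\<^sub>j \<gamma>\<^sub>j / \<Gamma>\<^sub>k\<close> and
  bounding the averaged function values from below by Jensen's inequality yields an
  \<open>\<epsilon>\<close>-subgradient at the averaged point, with \<open>\<epsilon>\<close> the weighted dispersion term; evaluating
  the resulting inequality at the averaged point itself shows \<open>\<epsilon> \<ge> 0\<close>.\<close>

lemma nonneg_if_nonneg_quadratic_near_zero: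
  fixes D K :: real
  assumes "\<And>t. 0 < t \<Longrightarrow> t \<le> 1 \<Longrightarrow> 0 \<le> t * D + t\<^sup>2 * K"
  shows "0 \<le> D"
proof (rule ccontr)
  assume "\<not> 0 \<le> D"
  define t where "t = min 1 (- D / (2 * \<bar>K\<bar> + 1))"
  have "0 < - D / (2 * \<bar>K\<bar> + 1)"
    using \<open>\<not> 0 \<le> D\<close> by (intro divide_pos_pos) auto
  then have t: "0 < t" "t \<le> 1"
    by (auto simp: t_def)
  have "t * K \<le> t * \<bar>K\<bar>"
    using t by (intro mult_left_mono) auto
  also have "\<dots> \<le> - D / (2 * \<bar>K\<bar> + 1) * \<bar>K\<bar>"
    unfolding t_def by (intro mult_right_mono) auto
  also have "\<dots> < - D"
    using \<open>\<not> 0 \<le> D\<close> mult_nonpos_nonneg[of D "\<bar>K\<bar>"] by (simp add: field_simps)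
  finally have "t * (D + t * K) < 0"
    using t by (simp add: mult_pos_neg)
  with assms[OF t] show False
    by (simp add: power2_eq_square algebra_simps)
qed

lemma convex_fun_le_interpolation:
  fixes g :: "'a::real_vector \<Rightarrow> ereal"
  assumes "convex_fun g" "g x = ereal a" "g y = ereal b" "0 \<le> t" "t \<le> 1"
  shows "g (x + t *\<^sub>R (y - x)) \<le> ereal (a + t * (b - a))"
proof -
  have "(1 - t) *\<^sub>R (x, a) + t *\<^sub>R (y, b) \<in> epigraph g"
    using assms by (intro convexD) (auto simp: convex_fun_def epigraph_def)
  then show ?thesis
    by (simp add: epigraph_def algebra_simps)
qed

lemma subgradient_of_regularized_minimizer:
  fixes g :: "'b::euclidean_space \<Rightarrow> ereal" and C :: "'b \<Rightarrow> 'c::euclidean_space"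
  assumes proper: "proper_fun g" and convex: "convex_fun g" and C: "linear C"
    and min: "\<And>q. g p + ereal (c \<bullet> (C p - d)) + ereal (lam / 2 * (norm (C p - d))\<^sup>2)
                  \<le> g q + ereal (c \<bullet> (C q - d)) + ereal (lam / 2 * (norm (C q - d))\<^sup>2)"
  shows "\<bar>g p\<bar> \<noteq> \<infinity>" and "- adjoint C (c + lam *\<^sub>R (C p - d)) \<in> eps_subdiff 0 g p"
proof -
  obtain q0 where "g q0 \<noteq> \<infinity>" and not_minf: "\<And>q. g q \<noteq> -\<infinity>"
    using proper by (auto simp: proper_fun_def)
  with min[of q0] show "\<bar>g p\<bar> \<noteq> \<infinity>"
    by auto
  then obtain P where P: "g p = ereal P"
    by auto
  define a where "a = C p - d"
  show "- adjoint C (c + lam *\<^sub>R (C p - d)) \<in> eps_subdiff 0 g p"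
    unfolding eps_subdiff_def
  proof (intro CollectI allI)
    fix q
    show "g p + ereal (- adjoint C (c + lam *\<^sub>R (C p - d)) \<bullet> (q - p) - 0) \<le> g q"
    proof (cases "g q")
      case (real G)
      define e where "e = C q - C p"
      have "0 \<le> t * (G - P + (c + lam *\<^sub>R a) \<bullet> e) + t\<^sup>2 * (lam / 2 * (norm e)\<^sup>2)"
        if t: "0 < t" "t \<le> 1" for t
      proof -
        have Ct: "C (p + t *\<^sub>R (q - p)) - d = a + t *\<^sub>R e"
          by (simp add: linear_add[OF C] linear_scale[OF C] linear_diff[OF C] a_def e_def)
        have "ereal (P + c \<bullet> a + lam / 2 * (norm a)\<^sup>2)
            \<le> g (p + t *\<^sub>R (q - p)) + ereal (c \<bullet> (a + t *\<^sub>R e)) + ereal (lam / 2 * (norm (a + t *\<^sub>R e))\<^sup>2)"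
          using min[of "p + t *\<^sub>R (q - p)"] by (simp add: P Ct a_def)
        also have "\<dots> \<le> ereal (P + t * (G - P)) + ereal (c \<bullet> (a + t *\<^sub>R e)) + ereal (lam / 2 * (norm (a + t *\<^sub>R e))\<^sup>2)"
          using convex_fun_le_interpolation[OF convex P real] t by (intro add_right_mono) auto
        finally have "P + c \<bullet> a + lam / 2 * (norm a)\<^sup>2
            \<le> P + t * (G - P) + c \<bullet> (a + t *\<^sub>R e) + lam / 2 * (norm (a + t *\<^sub>R e))\<^sup>2"
          by simp
        moreover have "(norm (a + t *\<^sub>R e))\<^sup>2 = (norm a)\<^sup>2 + 2 * t * (a \<bullet> e) + t\<^sup>2 * (norm e)\<^sup>2"
          unfolding power2_norm_eq_inner
          by (simp add: inner_commute[of e a] power2_eq_square algebra_simps)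
        moreover have "t * (G - P + (c + lam *\<^sub>R a) \<bullet> e) + t\<^sup>2 * (lam / 2 * (norm e)\<^sup>2)
            = (P + t * (G - P) + c \<bullet> (a + t *\<^sub>R e)
                + lam / 2 * ((norm a)\<^sup>2 + 2 * t * (a \<bullet> e) + t\<^sup>2 * (norm e)\<^sup>2))
              - (P + c \<bullet> a + lam / 2 * (norm a)\<^sup>2)"
          by (simp add: algebra_simps)
        ultimately show ?thesis
          by simp
      qed
      then have "0 \<le> G - P + (c + lam *\<^sub>R a) \<bullet> e"
        by (rule nonneg_if_nonneg_quadratic_near_zero)
      moreover have "- adjoint C (c + lam *\<^sub>R a) \<bullet> (q - p) = - ((c + lam *\<^sub>R a) \<bullet> e)"
        by (simp add: adjoint_clauses(2)[OF C] linear_diff[OF C] e_def)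
      ultimately show ?thesis
        by (simp add: P real a_def)
    qed (use not_minf in auto)
  qed
qed

lemma convex_fun_jensen:
  fixes g :: "'a::real_vector \<Rightarrow> ereal"
  assumes "convex_fun g" "finite A" "\<And>j. j \<in> A \<Longrightarrow> 0 \<le> a j" "sum a A = 1"
    and "\<And>j. j \<in> A \<Longrightarrow> g (p j) \<le> ereal (G j)"
  shows "g (\<Sum>j\<in>A. a j *\<^sub>R p j) \<le> ereal (\<Sum>j\<in>A. a j * G j)"
proof -
  have "(\<Sum>j\<in>A. a j *\<^sub>R (p j, G j)) \<in> epigraph g"
    using assms by (intro convex_sum) (auto simp: convex_fun_def epigraph_def)
  moreover have "(\<Sum>j\<in>A. a j *\<^sub>R (p j, G j)) = (\<Sum>j\<in>A. a j *\<^sub>R p j, \<Sum>j\<in>A. a j * G j)"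
    by (simp add: prod_eq_iff fst_sum snd_sum)
  ultimately show ?thesis
    by (simp add: epigraph_def)
qed

lemma sum_affine_minorants_recenter:
  fixes p s :: "'j \<Rightarrow> 'a::real_inner"
  shows "(\<Sum>j\<in>A. a j * (G j + s j \<bullet> (q - p j)))
       = (\<Sum>j\<in>A. a j * G j) + (\<Sum>j\<in>A. a j *\<^sub>R s j) \<bullet> (q - r) - (\<Sum>j\<in>A. a j * ((p j - r) \<bullet> s j))"
  by (simp add: inner_sum_left inner_commute[of _ "s _"]
      sum_distrib_left sum.distrib sum_subtractf algebra_simps)

lemma eps_subdiff_convex_combination:
  fixes g :: "'a::real_inner \<Rightarrow> ereal"
  assumes convex: "convex_fun g"
    and A: "finite A" "\<And>j. j \<in> A \<Longrightarrow> 0 \<le> a j" "sum a A = 1"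
    and finite_val: "\<And>j. j \<in> A \<Longrightarrow> \<bar>g (p j)\<bar> \<noteq> \<infinity>"
    and subgrad: "\<And>j. j \<in> A \<Longrightarrow> s j \<in> eps_subdiff 0 g (p j)"
  defines "pb \<equiv> \<Sum>j\<in>A. a j *\<^sub>R p j"
    and "eps \<equiv> \<Sum>j\<in>A. a j * ((p j - (\<Sum>i\<in>A. a i *\<^sub>R p i)) \<bullet> s j)"
  shows "0 \<le> eps" and "(\<Sum>j\<in>A. a j *\<^sub>R s j) \<in> eps_subdiff eps g pb"
proof -
  have eps: "eps = (\<Sum>j\<in>A. a j * ((p j - pb) \<bullet> s j))"
    by (simp add: eps_def pb_def)
  define G where "G j = real_of_ereal (g (p j))" for j
  have G: "g (p j) = ereal (G j)" if "j \<in> A" for j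
    using finite_val[OF that] by (simp add: G_def ereal_real')
  have minorant: "ereal (G j + s j \<bullet> (q - p j)) \<le> g q" if "j \<in> A" for j q
    using subgrad[OF that] G[OF that] by (simp add: eps_subdiff_def)
  have averaged: "ereal ((\<Sum>j\<in>A. a j * G j) + (\<Sum>j\<in>A. a j *\<^sub>R s j) \<bullet> (q - pb) - eps) \<le> g q" for q
  proof (cases "g q")
    case (real Gq)
    have "(\<Sum>j\<in>A. a j * (G j + s j \<bullet> (q - p j))) \<le> (\<Sum>j\<in>A. a j * Gq)"
      using minorant[of _ q] real A(2) by (intro sum_mono mult_left_mono) force+
    then show ?thesis
      using A(3) real by (simp add: sum_affine_minorants_recenter[where r = pb] eps
          sum_distrib_right[symmetric])
  next
    case MInf
    obtain j where "j \<in> A"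
      using A(3) by force
    with minorant[of j q] MInf show ?thesis
      by simp
  qed simp
  have jensen: "g pb \<le> ereal (\<Sum>j\<in>A. a j * G j)"
    unfolding pb_def using convex A G by (intro convex_fun_jensen) auto
  show "0 \<le> eps"
    using order_trans[OF averaged[of pb] jensen] by simp
  show "(\<Sum>j\<in>A. a j *\<^sub>R s j) \<in> eps_subdiff eps g pb"
  proof (unfold eps_subdiff_def, intro CollectI allI)
    fix q
    have "g pb + ereal ((\<Sum>j\<in>A. a j *\<^sub>R s j) \<bullet> (q - pb) - eps)
        \<le> ereal (\<Sum>j\<in>A. a j * G j) + ereal ((\<Sum>j\<in>A. a j *\<^sub>R s j) \<bullet> (q - pb) - eps)"
      using jensen by (rule add_right_mono)
    also have "\<dots> \<le> g q"
      using averaged[of q] by (simp add: add_diff_eq)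
    finally show "g pb + ereal ((\<Sum>j\<in>A. a j *\<^sub>R s j) \<bullet> (q - pb) - eps) \<le> g q" .
  qed
qed

lemma PMM_step_weight_pos:
  assumes run: "PMM_run f g M C d lam \<rho>bar u v z w \<gamma> \<rho>" and j: "1 \<le> j"
  shows "0 < \<rho> j * \<gamma> j"
proof -
  define a where "a = C (v j) - d + w (j - 1)"
  define b where "b = w (j - 1) - M (u j)"
  have lam: "0 < lam" and "\<rho>bar < 1" "1 - \<rho>bar \<le> \<rho> j"
    and nondegenerate: "norm (M (u j) + C (v j) - d) + norm (M (u j) - w (j - 1)) \<noteq> 0"
    and \<gamma>: "\<gamma> j = (lam * (norm (C (v j) - d + w (j - 1)))\<^sup>2
                     + lam * ((d - C (v j) - M (u j)) \<bullet> (w (j - 1) - M (u j))))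
                  / ((norm (M (u j) + C (v j) - d))\<^sup>2 + lam\<^sup>2 * (norm (M (u j) - w (j - 1)))\<^sup>2)"
    using run j unfolding PMM_run_def by blast+
  then have "0 < \<rho> j"
    by linarith
  have ab: "M (u j) + C (v j) - d = a - b" "M (u j) - w (j - 1) = - b" "d - C (v j) - M (u j) = b - a"
    by (simp_all add: a_def b_def algebra_simps)
  have \<gamma>_ab: "\<gamma> j = lam * ((norm a)\<^sup>2 + (b - a) \<bullet> b) / ((norm (a - b))\<^sup>2 + lam\<^sup>2 * (norm b)\<^sup>2)"
    using \<gamma> unfolding ab a_def[symmetric] b_def[symmetric] by (simp add: distrib_left)
  have "a - b \<noteq> 0 \<or> b \<noteq> 0"
    using nondegenerate unfolding ab by auto
  then have "a \<noteq> 0 \<or> b \<noteq> 0"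
    by auto
  have "2 * ((norm a)\<^sup>2 + (b - a) \<bullet> b) = (norm a)\<^sup>2 + (norm b)\<^sup>2 + (norm (a - b))\<^sup>2"
    by (simp add: power2_norm_eq_inner inner_commute[of b a] algebra_simps)
  with \<open>a \<noteq> 0 \<or> b \<noteq> 0\<close> have "0 < (norm a)\<^sup>2 + (b - a) \<bullet> b"
    by (smt (verit) zero_less_power2 zero_le_power2 norm_eq_zero)
  moreover have "0 < (norm (a - b))\<^sup>2 + lam\<^sup>2 * (norm b)\<^sup>2"
    using \<open>a - b \<noteq> 0 \<or> b \<noteq> 0\<close> lam by (auto intro: add_pos_nonneg add_nonneg_pos)
  ultimately have "0 < \<gamma> j"
    using lam by (simp add: \<gamma>_ab)
  with \<open>0 < \<rho> j\<close> show ?thesis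
    by simp
qed

lemma PMM_v_subgradient:
  assumes run: "PMM_run f g M C d lam \<rho>bar u v z w \<gamma> \<rho>"
    and "proper_fun g" "convex_fun g" "linear C" "1 \<le> j"
  shows "\<bar>g (v j)\<bar> \<noteq> \<infinity>"
    and "- adjoint C (z (j - 1) + lam *\<^sub>R w (j - 1) + lam *\<^sub>R (C (v j) - d)) \<in> eps_subdiff 0 g (v j)"
proof -
  have "\<And>v'. g (v j) + ereal ((z (j - 1) + lam *\<^sub>R w (j - 1)) \<bullet> (C (v j) - d)) + ereal (lam / 2 * (norm (C (v j) - d))\<^sup>2)
          \<le> g v' + ereal ((z (j - 1) + lam *\<^sub>R w (j - 1)) \<bullet> (C v' - d)) + ereal (lam / 2 * (norm (C v' - d))\<^sup>2)"
    using run \<open>1 \<le> j\<close> unfolding PMM_run_def by blast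
  from subgradient_of_regularized_minimizer[OF assms(2-4) this]
  show "\<bar>g (v j)\<bar> \<noteq> \<infinity>"
    and "- adjoint C (z (j - 1) + lam *\<^sub>R w (j - 1) + lam *\<^sub>R (C (v j) - d)) \<in> eps_subdiff 0 g (v j)" .
qed

lemma PMM_u_subgradient:
  assumes run: "PMM_run f g M C d lam \<rho>bar u v z w \<gamma> \<rho>"
    and "proper_fun f" "convex_fun f" "linear M" "1 \<le> j"
  shows "\<bar>f (u j)\<bar> \<noteq> \<infinity>"
    and "- adjoint M (z (j - 1) + lam *\<^sub>R (C (v j) - d) + lam *\<^sub>R M (u j)) \<in> eps_subdiff 0 f (u j)"
proof -
  have "\<And>u'. f (u j) + ereal ((z (j - 1) + lam *\<^sub>R (C (v j) - d)) \<bullet> (M (u j) - 0)) + ereal (lam / 2 * (norm (M (u j) - 0))\<^sup>2)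
          \<le> f u' + ereal ((z (j - 1) + lam *\<^sub>R (C (v j) - d)) \<bullet> (M u' - 0)) + ereal (lam / 2 * (norm (M u' - 0))\<^sup>2)"
    using run \<open>1 \<le> j\<close> unfolding PMM_run_def diff_zero by blast
  from subgradient_of_regularized_minimizer[OF assms(2-4) this]
  show "\<bar>f (u j)\<bar> \<noteq> \<infinity>"
    and "- adjoint M (z (j - 1) + lam *\<^sub>R (C (v j) - d) + lam *\<^sub>R M (u j)) \<in> eps_subdiff 0 f (u j)"
    by simp_all
qed

theorem mainTheorem6:
  fixes f :: "'a::euclidean_space \<Rightarrow> ereal" and g :: "'b::euclidean_space \<Rightarrow> ereal"
    and M :: "'a \<Rightarrow> 'c::euclidean_space" and C :: "'b \<Rightarrow> 'c" and d :: 'c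
    and lam \<rho>bar :: real
    and u :: "nat \<Rightarrow> 'a" and v :: "nat \<Rightarrow> 'b" and z w :: "nat \<Rightarrow> 'c"
    and \<gamma> \<rho> :: "nat \<Rightarrow> real"
    and x y :: "nat \<Rightarrow> 'c" and \<Gamma> :: "nat \<Rightarrow> real"
    and ubar :: "nat \<Rightarrow> 'a" and vbar :: "nat \<Rightarrow> 'b" and xbar ybar :: "nat \<Rightarrow> 'c"
    and epsu epsv :: "nat \<Rightarrow> real"
    and k :: nat
  assumes f_pcc: "proper_closed_convex f" and g_pcc: "proper_closed_convex g"
    and M_lin: "linear M" and C_lin: "linear C"
    and A1: "\<exists>u0 v0 z0. saddle_point f g M C d u0 v0 z0"
    and A2: "rel_interior (edom (fenchel_conj f)) \<inter> range (adjoint M) \<noteq> {}"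
    and A3: "rel_interior (edom (fenchel_conj g)) \<inter> range (adjoint C) \<noteq> {}"
    and run: "PMM_run f g M C d lam \<rho>bar u v z w \<gamma> \<rho>"
    and x_def: "\<And>j. x j = z (j-1) + lam *\<^sub>R w (j-1) + lam *\<^sub>R (C (v j) - d)"
    and y_def: "\<And>j. y j = x j - lam *\<^sub>R (w (j-1) - M (u j))"
    and Gamma_def: "\<And>k. \<Gamma> k = (\<Sum>j=1..k. \<rho> j * \<gamma> j)"
    and ubar_def: "\<And>k. ubar k = (1 / \<Gamma> k) *\<^sub>R (\<Sum>j=1..k. (\<rho> j * \<gamma> j) *\<^sub>R u j)"
    and vbar_def: "\<And>k. vbar k = (1 / \<Gamma> k) *\<^sub>R (\<Sum>j=1..k. (\<rho> j * \<gamma> j) *\<^sub>R v j)"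
    and xbar_def: "\<And>k. xbar k = (1 / \<Gamma> k) *\<^sub>R (\<Sum>j=1..k. (\<rho> j * \<gamma> j) *\<^sub>R x j)"
    and ybar_def: "\<And>k. ybar k = (1 / \<Gamma> k) *\<^sub>R (\<Sum>j=1..k. (\<rho> j * \<gamma> j) *\<^sub>R y j)"
    and epsu_def: "\<And>k. epsu k = (1 / \<Gamma> k) * (\<Sum>j=1..k. \<rho> j * \<gamma> j * ((u j - ubar k) \<bullet> (- adjoint M (y j))))"
    and epsv_def: "\<And>k. epsv k = (1 / \<Gamma> k) * (\<Sum>j=1..k. \<rho> j * \<gamma> j * ((v j - vbar k) \<bullet> (- adjoint C (x j))))"
    and k1: "k \<ge> 1"
  shows "epsv k \<ge> 0 \<and> epsu k \<ge> 0 \<and>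
         - adjoint C (xbar k) \<in> eps_subdiff (epsv k) g (vbar k) \<and>
         - adjoint M (ybar k) \<in> eps_subdiff (epsu k) f (ubar k)"
proof -
  \<comment> \<open>Neither closedness nor (A.1)--(A.3) is needed for this ergodic estimate.\<close>
  have proper: "proper_fun f" "proper_fun g" and convex: "convex_fun f" "convex_fun g"
    using f_pcc g_pcc by (auto simp: proper_closed_convex_def)
  have weight_pos: "0 < \<rho> j * \<gamma> j" if "j \<in> {1..k}" for j
    using PMM_step_weight_pos[OF run] that by simp
  then have "0 < \<Gamma> k"
    unfolding Gamma_def using k1 by (intro sum_pos) auto
  define a where "a j = \<rho> j * \<gamma> j / \<Gamma> k" for j
  have a: "\<And>j. j \<in> {1..k} \<Longrightarrow> 0 \<le> a j" "sum a {1..k} = 1"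
    using weight_pos \<open>0 < \<Gamma> k\<close> by (auto simp: a_def Gamma_def sum_divide_distrib[symmetric] less_imp_le)
  have y_eq: "y j = z (j - 1) + lam *\<^sub>R (C (v j) - d) + lam *\<^sub>R M (u j)" for j
    by (simp add: y_def x_def algebra_simps)
  note v_step = eps_subdiff_convex_combination[OF convex(2) finite_atLeastAtMost a,
      of v "\<lambda>j. - adjoint C (x j)"]
  note u_step = eps_subdiff_convex_combination[OF convex(1) finite_atLeastAtMost a,
      of u "\<lambda>j. - adjoint M (y j)"]
  have "linear (adjoint C)" "linear (adjoint M)"
    using adjoint_linear C_lin M_lin by auto
  then have "vbar k = (\<Sum>j=1..k. a j *\<^sub>R v j)" "ubar k = (\<Sum>j=1..k. a j *\<^sub>R u j)"
    "- adjoint C (xbar k) = (\<Sum>j=1..k. a j *\<^sub>R - adjoint C (x j))"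
    "- adjoint M (ybar k) = (\<Sum>j=1..k. a j *\<^sub>R - adjoint M (y j))"
    "epsv k = (\<Sum>j=1..k. a j * ((v j - vbar k) \<bullet> - adjoint C (x j)))"
    "epsu k = (\<Sum>j=1..k. a j * ((u j - ubar k) \<bullet> - adjoint M (y j)))"
    by (simp_all add: vbar_def ubar_def xbar_def ybar_def epsv_def epsu_def a_def linear_scale linear_sum
        scaleR_sum_right sum_distrib_left sum_negf[symmetric])
  with v_step u_step PMM_v_subgradient[OF run proper(2) convex(2) C_lin]
    PMM_u_subgradient[OF run proper(1) convex(1) M_lin]
  show ?thesis
    by (simp add: x_def y_eq)
qed

end
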